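(* Let $M,N\ge1$, $\mathbf y\in\mathbb{R}^M$, $\mathbf H\in\mathbb{R}^{M\times N}$ with $R=\operatorname{rank}(\mathbf H)\ge1$, and $\sigma_e^2>0$, $\sigma_\epsilon^2>0$. Let $\mathbf H=\mathbf U\boldsymbol\Sigma\mathbf V^{\mathrm T}$ be a singular value decomposition ($\mathbf U,\mathbf V$ orthogonal) with nonzero singular values $\lambda_1\ge\cdots\ge\lambda_R>0$ in the first $R$ diagonal positions of $\boldsymbol\Sigma$, let $\boldsymbol\lambda=(\lambda_1,\dots,\lambda_R)^{\mathrm T}$ and $\widetilde{\mathbf y}=\mathbf U^{\mathrm T}\mathbf y$. Let $$f(\mathbf x)=\frac{\|\mathbf y-\mathbf H\mathbf x\|_2^2}{2(\sigma_e^2\|\mathbf x\|_2^2+\sigma_\epsilon^2)}+\frac M2\log(\sigma_e^2\|\mathbf x\|_2^2+\sigma_\epsilon^2),$$ and for $\nu>-\lambda_R^2/(2\sigma_e^2)$ let $$g(\nu)=\sum_{j=1}^{R}\frac{\widetilde y_j^2\,\nu\sigma_e^2}{\lambda_j^2+2\nu\sigma_e^2}+\frac12\|\widetilde{\mathbf y}_{R+1:M}\|_2^2-\frac M2\left(\sum_{j=1}^{R}\frac{\sigma_e^2\widetilde y_j^2\lambda_j^2}{(\lambda_j^2+2\nu\sigma_e^2)^2}+\sigma_\epsilon^2\right)+\nu\sigma_\epsilon^2 .$$ Then the following hold. (A) If $R\le N-1$ and $g(0)\ge0$, then every $\mathbf x=\mathbf V\widetilde{\mathbf x}$ with $\widetilde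 x_j=\widetilde y_j/\lambda_j$ for $j=1,\dots,R$ and $\sum_{i=R+1}^N\widetilde x_i^2=\frac{2g(0)}{M\sigma_e^2}$ is a global minimizer of $f$ on $\mathbb{R}^N$. (B) If $R\le N-1$ and $g(0)<0$, then there exists $\nu^\star\in(0,M/2]$ with $g(\nu^\star)=0$, and for any such $\nu^\star$ the vector $\mathbf x=\mathbf V\widetilde{\mathbf x}$ with $\widetilde x_j=\frac{\widetilde y_j\lambda_j}{\lambda_j^2+2\nu^\star\sigma_e^2}$ for $j=1,\dots,R$ and $\widetilde x_i=0$ for $i=R+1,\dots,N$ is a global minimizer of $f$. (C) If $R=N$, then for any $\nu^\star\in\left(-\frac{\lambda_R^2}{2\sigma_e^2},\frac M2\right]$ with $g(\nu^\star)=0$, the vector $\mathbf x=(\mathbf H^{\mathrm T}\mathbf H+2\nu^\star\sigma_e^2\mathbf I_N)^{-1}\mathbf H^{\mathrm T}\mathbf y$ is a global minimizer of $f$.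
   Context: $\widetilde{\mathbf y}_{R+1:M}=(\widetilde y_{R+1},\dots,\widetilde y_M)^{\mathrm T}$; if $R=M$ it is empty and its squared norm is $0$. The function $f$ is, up to additive constants, the negative log-likelihood of $\mathbf x$ in the model $\mathbf y=(\mathbf H+\mathbf E)\mathbf x+\boldsymbol\epsilon$ with $\mathbf E$ having i.i.d. $\mathcal N(0,\sigma_e^2)$ entries and $\boldsymbol\epsilon\sim\mathcal N(\mathbf 0,\sigma_\epsilon^2\mathbf I_M)$ independent; its global minimizers are the maximum likelihood estimates of $\mathbf x$. *)

theory Defs
  imports "Jordan_Normal_Form.DL_Rank" "Jordan_Normal_Form.Gauss_Jordan_Elimination"
begin

text \<open>Vectors/matrices are Jordan_Normal_Form vectors/matrices; indices are 0-based,
  so the paper's index j = 1..R corresponds to j = 0..R-1 here.\<close>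

definition sqn :: "real vec \<Rightarrow> real" where
  "sqn v = v \<bullet> v"

definition fobj :: "real vec \<Rightarrow> real mat \<Rightarrow> real \<Rightarrow> real \<Rightarrow> real vec \<Rightarrow> real" where
  "fobj y H se2 sn2 x =
     sqn (y - H *\<^sub>v x) / (2 * (se2 * sqn x + sn2))
     + real (dim_vec y) / 2 * ln (se2 * sqn x + sn2)"

text \<open>Secular function g; yt = U^T y, lam j = lambda_(j+1), R = rank.\<close>
definition gfun :: "nat \<Rightarrow> nat \<Rightarrow> (nat \<Rightarrow> real) \<Rightarrow> real vec \<Rightarrow> real \<Rightarrow> real \<Rightarrow> real \<Rightarrow> real" where
  "gfun M R lam yt se2 sn2 \<nu> =
     (\<Sum>j<R. (yt $ j)\<^sup>2 * \<nu> * se2 / ((lam j)\<^sup>2 + 2 * \<nu> * se2))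
     + 1/2 * (\<Sum>j\<in>{R..<M}. (yt $ j)\<^sup>2)
     - real M / 2 * ((\<Sum>j<R. se2 * (yt $ j)\<^sup>2 * (lam j)\<^sup>2 / ((lam j)\<^sup>2 + 2 * \<nu> * se2)\<^sup>2) + sn2)
     + \<nu> * sn2"

definition is_global_min :: "nat \<Rightarrow> (real vec \<Rightarrow> real) \<Rightarrow> real vec \<Rightarrow> bool" where
  "is_global_min N f x \<longleftrightarrow> x \<in> carrier_vec N \<and> (\<forall>z \<in> carrier_vec N. f x \<le> f z)"

end

theory Submission
  imports Defs
begin

text \<open>
  Write \<open>x = V w\<close> and \<open>yt = U\<^sup>T y\<close>. Then the objective is \<open>\<Phi>(w) / (2 B(w)) + M/2 ln B(w)\<close> with
  \<open>\<Phi>(w) = \<Sum>\<^bsub>j<R\<^esub> (yt\<^sub>j - \<lambda>\<^sub>j w\<^sub>j)\<^sup>2 + \<Sum>\<^bsub>j\<ge>R\<^esub> yt\<^sub>j\<^sup>2\<close> and \<open>B(w) = \<sigma>\<^sub>e\<^sup>2 |w|\<^sup>2 + \<sigma>\<^sub>\<epsilon>\<^sup>2\<close>.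
  If \<open>w\<close> minimizes the penalized problem \<open>\<Phi> + 2\<nu>B\<close> and satisfies \<open>\<Phi>(w) = (M - 2\<nu>) B(w)\<close>,
  then the tangent-line bound \<open>ln t \<le> t - 1\<close> at \<open>t = B(w) / B(z)\<close> shows that \<open>w\<close> minimizes
  the objective. The penalized problem decouples along the singular directions and is solved by
  \<open>w\<^sub>j = yt\<^sub>j \<lambda>\<^sub>j / (\<lambda>\<^sub>j\<^sup>2 + 2\<nu>\<sigma>\<^sub>e\<^sup>2)\<close> for \<open>j < R\<close>; for such \<open>w\<close> the defect \<open>\<Phi> - (M - 2\<nu>) B\<close>
  equals \<open>2 g(\<nu>) - (M - 2\<nu>) \<sigma>\<^sub>e\<^sup>2 \<Sum>\<^bsub>j\<ge>R\<^esub> w\<^sub>j\<^sup>2\<close>. So every admissible root of \<open>g\<close> yields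
  a minimizer, and at \<open>\<nu> = 0\<close> the free coordinates \<open>w\<^sub>j\<close>, \<open>j \<ge> R\<close>, absorb \<open>g(0) \<ge> 0\<close>.
  Since \<open>g(M/2) \<ge> 0\<close>, a negative \<open>g(0)\<close> forces a root in \<open>(0, M/2]\<close>.
\<close>

lemma ratio_plus_log_le:
  fixes p q p0 q0 m \<nu> :: real
  assumes q0: "q0 > 0" and q: "q > 0" and m: "m \<ge> 0"
    and stationary: "p0 = (m - 2 * \<nu>) * q0"
    and penalized: "p0 + 2 * \<nu> * q0 \<le> p + 2 * \<nu> * q"
  shows "p0 / (2 * q0) + m / 2 * ln q0 \<le> p / (2 * q) + m / 2 * ln q"
proof -
  have "ln (q0 / q) \<le> q0 / q - 1" using q q0 by (intro ln_le_minus_one) simp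
  then have "m / 2 * (ln q0 - ln q) \<le> m / 2 * (q0 / q - 1)"
    using q q0 m by (intro mult_left_mono) (auto simp: ln_div)
  then have log: "m / 2 * ln q0 \<le> m / 2 * ln q + m * q0 / (2 * q) - m / 2"
    using q by (simp add: field_simps)
  have "p \<ge> m * q0 - 2 * \<nu> * q" using stationary penalized by (simp add: algebra_simps)
  then have "p / (2 * q) \<ge> (m * q0 - 2 * \<nu> * q) / (2 * q)" using q by (simp add: divide_right_mono)
  also have "(m * q0 - 2 * \<nu> * q) / (2 * q) = m * q0 / (2 * q) - \<nu>" using q by (simp add: field_simps)
  finally have ratio: "p / (2 * q) \<ge> m * q0 / (2 * q) - \<nu>" .
  have "p0 / (2 * q0) = m / 2 - \<nu>" using stationary q0 by (simp add: field_simps)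
  with log ratio show ?thesis by linarith
qed

lemma sum_lessThan_split:
  "(R::nat) \<le> M \<Longrightarrow> (\<Sum>i<M. f i) = (\<Sum>i<R. f i) + (\<Sum>i\<in>{R..<M}. f i)"
  using sum.atLeastLessThan_concat[of 0 R M f] by (simp add: atLeast0LessThan)

lemma quadratic_min_le:
  fixes a l c x w :: real
  assumes d: "l\<^sup>2 + c > 0" and x: "x = a * l / (l\<^sup>2 + c)"
  shows "(a - l * x)\<^sup>2 + c * x\<^sup>2 \<le> (a - l * w)\<^sup>2 + c * w\<^sup>2"
proof -
  have al: "a * l = (l\<^sup>2 + c) * x" using d x by simp
  have "(a - l * w)\<^sup>2 + c * w\<^sup>2 - ((a - l * x)\<^sup>2 + c * x\<^sup>2)
      = (l\<^sup>2 + c) * (w\<^sup>2 - x\<^sup>2) - 2 * (a * l) * (w - x)"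
    by (simp add: power2_eq_square algebra_simps)
  also have "\<dots> = (l\<^sup>2 + c) * (w - x)\<^sup>2"
    unfolding al by (simp add: power2_eq_square algebra_simps)
  also have "\<dots> \<ge> 0" using d by simp
  finally show ?thesis by simp
qed

lemma quadratic_min_value:
  fixes a l c x :: real
  assumes d: "l\<^sup>2 + c > 0" and x: "x = a * l / (l\<^sup>2 + c)"
  shows "(a - l * x)\<^sup>2 + c * x\<^sup>2 = a\<^sup>2 * c / (l\<^sup>2 + c)"
proof -
  have al: "(l\<^sup>2 + c) * x = a * l" using d x by simp
  have res: "a - l * x = a * c / (l\<^sup>2 + c)" using d x by (simp add: field_simps power2_eq_square)
  have "(a - l * x)\<^sup>2 + c * x\<^sup>2 = a\<^sup>2 - 2 * (a * l) * x + ((l\<^sup>2 + c) * x) * x"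
    by (simp add: power2_eq_square algebra_simps)
  also have "\<dots> = a * (a - l * x)" unfolding al by (simp add: power2_eq_square algebra_simps)
  also have "\<dots> = a\<^sup>2 * c / (l\<^sup>2 + c)" unfolding res by (simp add: power2_eq_square)
  finally show ?thesis .
qed

lemma (in vec_space) rank_le_nr:
  assumes A: "A \<in> carrier_mat n nc"
  shows "rank A \<le> n"
proof -
  have "subspace class_ring (span (set (cols A))) V"
    using A by (metis cols_dim carrier_matD(1) span_is_subspace)
  then have "vectorspace.dim class_ring (vs (span (set (cols A)))) \<le> dim"
    using subspace_dim fin_dim fin_dim_span_cols[OF A] by blast
  then show ?thesis unfolding rank_def dim_is_n .
qed

lemma orthogonal_mult_transpose:
  assumes Q: "(Q :: 'a :: field mat) \<in> carrier_mat n n" and orth: "transpose_mat Q * Q = 1\<^sub>m n"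
  shows "Q * transpose_mat Q = 1\<^sub>m n"
  by (rule mat_mult_left_right_inverse[of "transpose_mat Q" n Q]) (use Q orth in auto)

lemma transpose_mult_mat_vec_cancel:
  assumes Q: "(Q :: 'a :: comm_ring_1 mat) \<in> carrier_mat m n"
    and orth: "transpose_mat Q * Q = 1\<^sub>m n" and v: "v \<in> carrier_vec n"
  shows "transpose_mat Q *\<^sub>v (Q *\<^sub>v v) = v"
proof -
  have "transpose_mat Q *\<^sub>v (Q *\<^sub>v v) = (transpose_mat Q * Q) *\<^sub>v v"
    using Q v by (intro assoc_mult_mat_vec[symmetric]) auto
  then show ?thesis using orth v by simp
qed

lemma sqn_nonneg: "sqn v \<ge> 0"
  unfolding sqn_def scalar_prod_def by (simp add: sum_nonneg)

lemma sqn_eq_sum_squares: "v \<in> carrier_vec n \<Longrightarrow> sqn v = (\<Sum>i<n. (v $ i)\<^sup>2)"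
  unfolding sqn_def scalar_prod_def by (simp add: power2_eq_square atLeast0LessThan)

lemma sqn_mult_orthonormal:
  assumes Q: "Q \<in> carrier_mat m n" and orth: "transpose_mat Q * Q = 1\<^sub>m n"
    and v: "v \<in> carrier_vec n"
  shows "sqn (Q *\<^sub>v v) = sqn v"
proof -
  have "sqn (Q *\<^sub>v v) = (transpose_mat Q *\<^sub>v (Q *\<^sub>v v)) \<bullet> v"
    unfolding sqn_def using Q v by (intro transpose_vec_mult_scalar[symmetric]) auto
  then show ?thesis unfolding transpose_mult_mat_vec_cancel[OF assms] sqn_def .
qed

lemma smult_one_mat_mult_vec:
  "(v :: 'a :: comm_ring_1 vec) \<in> carrier_vec n \<Longrightarrow> (c \<cdot>\<^sub>m 1\<^sub>m n) *\<^sub>v v = c \<cdot>\<^sub>v v"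
  by (intro eq_vecI) (auto simp: row_smult)

lemma diag_rect_mult_vec:
  assumes A: "A \<in> carrier_mat m n"
    and diag: "\<forall>i<m. \<forall>j<n. A $$ (i,j) = (if i = j \<and> i < r then d i else 0)"
    and r: "r \<le> m" "r \<le> n" and w: "w \<in> carrier_vec n"
  shows "A *\<^sub>v w = vec m (\<lambda>i. if i < r then d i * w $ i else 0)"
proof (rule eq_vecI)
  fix i assume "i < dim_vec (vec m (\<lambda>i. if i < r then d i * w $ i else 0))"
  then have i: "i < m" by simp
  have "(A *\<^sub>v w) $ i = (\<Sum>j\<in>{0..<n}. A $$ (i,j) * w $ j)"
    using A w i by (simp add: mult_mat_vec_def scalar_prod_def)
  also have "\<dots> = (\<Sum>j\<in>{0..<n}. if j = i then (if i < r then d i * w $ i else 0) else 0)"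
    using diag i by (intro sum.cong) auto
  also have "\<dots> = (if i < r then d i * w $ i else 0)" using r by simp
  finally show "(A *\<^sub>v w) $ i = vec m (\<lambda>i. if i < r then d i * w $ i else 0) $ i" using i by simp
qed (use A in simp)

lemma mat_inverse_mult_vec_eq:
  assumes A: "(A :: 'a :: field mat) \<in> carrier_mat n n"
    and ker: "\<And>v. v \<in> carrier_vec n \<Longrightarrow> A *\<^sub>v v = 0\<^sub>v n \<Longrightarrow> v = 0\<^sub>v n"
    and x: "x \<in> carrier_vec n" and Ax: "A *\<^sub>v x = b"
  shows "the (mat_inverse A) *\<^sub>v b = x"
proof -
  have "det A \<noteq> 0" using det_0_iff_vec_prod_zero_field[OF A] ker by blast
  then have "A \<in> Units (ring_mat TYPE('a) n ())" by (rule det_non_zero_imp_unit[OF A])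
  then obtain B where B: "mat_inverse A = Some B"
    using mat_inverse(1)[OF A, of "()"] by (cases "mat_inverse A") auto
  then have "B * A = 1\<^sub>m n" "B \<in> carrier_mat n n" using mat_inverse(2)[OF A] by auto
  then have "B *\<^sub>v (A *\<^sub>v x) = x" using A x by (simp flip: assoc_mult_mat_vec)
  then show ?thesis using B Ax by simp
qed

lemma gfun_continuous_on:
  assumes lam: "\<forall>j<R. lam j > 0" and se2: "se2 > 0"
  shows "continuous_on {0..} (gfun M R lam yt se2 sn2)"
proof -
  have "(lam j)\<^sup>2 + 2 * \<nu> * se2 > 0" if "\<nu> \<ge> 0" "j < R" for \<nu> j
    using lam se2 that by (intro add_pos_nonneg) auto
  then show ?thesis unfolding gfun_def by (intro continuous_intros) fastforce+
qed

lemma gfun_half_M_nonneg: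
  assumes lam: "\<forall>j<R. lam j > 0" and se2: "se2 > 0"
  shows "gfun M R lam yt se2 sn2 (real M / 2) \<ge> 0"
proof -
  let ?\<nu> = "real M / 2"
  let ?d = "\<lambda>j. (lam j)\<^sup>2 + 2 * ?\<nu> * se2"
  have "?\<nu> * (se2 * (yt $ j)\<^sup>2 * (lam j)\<^sup>2 / (?d j)\<^sup>2) \<le> (yt $ j)\<^sup>2 * ?\<nu> * se2 / ?d j"
    if "j < R" for j
  proof -
    have "0 < ?d j" "(lam j)\<^sup>2 \<le> ?d j" using lam se2 that by (auto intro!: add_pos_nonneg)
    then have "(lam j)\<^sup>2 / (?d j)\<^sup>2 \<le> 1 / ?d j" by (simp add: divide_simps power2_eq_square)
    from mult_left_mono[OF this, of "?\<nu> * se2 * (yt $ j)\<^sup>2"] se2 show ?thesis by (simp add: mult_ac)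
  qed
  then have "?\<nu> * (\<Sum>j<R. se2 * (yt $ j)\<^sup>2 * (lam j)\<^sup>2 / (?d j)\<^sup>2)
      \<le> (\<Sum>j<R. (yt $ j)\<^sup>2 * ?\<nu> * se2 / ?d j)"
    unfolding sum_distrib_left by (intro sum_mono) simp
  moreover have "(\<Sum>j\<in>{R..<M}. (yt $ j)\<^sup>2) \<ge> 0" by (simp add: sum_nonneg)
  ultimately show ?thesis unfolding gfun_def by (simp add: algebra_simps)
qed

lemma gfun_root_exists:
  assumes lam: "\<forall>j<R. lam j > 0" and se2: "se2 > 0"
    and g0: "gfun M R lam yt se2 sn2 0 < 0"
  shows "\<exists>\<nu>. 0 < \<nu> \<and> \<nu> \<le> real M / 2 \<and> gfun M R lam yt se2 sn2 \<nu> = 0"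
proof -
  have "continuous_on {0..real M / 2} (gfun M R lam yt se2 sn2)"
    using gfun_continuous_on[OF lam se2] by (rule continuous_on_subset) auto
  then obtain \<nu> where "0 \<le> \<nu>" "\<nu> \<le> real M / 2" "gfun M R lam yt se2 sn2 \<nu> = 0"
    using IVT'[of "gfun M R lam yt se2 sn2" 0 0 "real M / 2"] g0 gfun_half_M_nonneg[OF lam se2]
    by force
  moreover have "\<nu> \<noteq> 0" using g0 calculation(3) by auto
  ultimately show ?thesis by (intro exI[of _ \<nu>]) auto
qed

locale svd_setting =
  fixes M N R :: nat and y :: "real vec" and H U V S :: "real mat"
    and lam :: "nat \<Rightarrow> real" and se2 sn2 :: real
  assumes y: "y \<in> carrier_vec M"
    and H: "H \<in> carrier_mat M N"
    and RM: "R \<le> M" and RN: "R \<le> N"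
    and se2: "se2 > 0" and sn2: "sn2 > 0"
    and U: "U \<in> carrier_mat M M" and Uorth: "transpose_mat U * U = 1\<^sub>m M"
    and V: "V \<in> carrier_mat N N" and Vorth: "transpose_mat V * V = 1\<^sub>m N"
    and S: "S \<in> carrier_mat M N"
    and Sdiag: "\<forall>i<M. \<forall>j<N. S $$ (i,j) = (if i = j \<and> i < R then lam i else 0)"
    and lam_mono: "\<forall>i j. i \<le> j \<and> j < R \<longrightarrow> lam j \<le> lam i"
    and lam_pos: "\<forall>j<R. lam j > 0"
    and svd: "H = U * S * transpose_mat V"
begin

abbreviation yt :: "real vec" where "yt \<equiv> transpose_mat U *\<^sub>v y"

definition rss :: "real vec \<Rightarrow> real" where
  "rss w = (\<Sum>j<R. (yt $ j - lam j * w $ j)\<^sup>2) + (\<Sum>j\<in>{R..<M}. (yt $ j)\<^sup>2)"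

definition total_var :: "real vec \<Rightarrow> real" where
  "total_var w = se2 * sqn w + sn2"

lemma total_var_pos: "total_var w > 0"
  unfolding total_var_def using se2 sn2 sqn_nonneg[of w] by (simp add: add_nonneg_pos)

lemma yt_carrier: "yt \<in> carrier_vec M"
  using U y by simp

lemma U_mult_yt: "U *\<^sub>v yt = y"
  using transpose_mult_mat_vec_cancel[of "transpose_mat U" M M y] U Uorth y
  by (simp add: orthogonal_mult_transpose)

lemma V_mult_transpose_V: "z \<in> carrier_vec N \<Longrightarrow> V *\<^sub>v (transpose_mat V *\<^sub>v z) = z"
  using transpose_mult_mat_vec_cancel[of "transpose_mat V" N N z] V Vorth
  by (simp add: orthogonal_mult_transpose)

lemma S_mult_vec:
  "w \<in> carrier_vec N \<Longrightarrow> S *\<^sub>v w = vec M (\<lambda>i. if i < R then lam i * w $ i else 0)"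
  by (rule diag_rect_mult_vec[OF S Sdiag RM RN])

lemma transpose_S_mult_vec:
  "v \<in> carrier_vec M \<Longrightarrow>
    transpose_mat S *\<^sub>v v = vec N (\<lambda>i. if i < R then lam i * v $ i else 0)"
  using S Sdiag RM RN by (intro diag_rect_mult_vec) auto

lemma H_mult_V: "w \<in> carrier_vec N \<Longrightarrow> H *\<^sub>v (V *\<^sub>v w) = U *\<^sub>v (S *\<^sub>v w)"
  unfolding svd using U S V transpose_mult_mat_vec_cancel[OF V Vorth]
  by (simp add: assoc_mult_mat_vec[of _ M M _ N] assoc_mult_mat_vec[of _ M N _ N])

lemma transpose_H_mult:
  "v \<in> carrier_vec M \<Longrightarrow>
    transpose_mat H *\<^sub>v v = V *\<^sub>v (transpose_mat S *\<^sub>v (transpose_mat U *\<^sub>v v))"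
proof -
  assume v: "v \<in> carrier_vec M"
  have "transpose_mat H = V * (transpose_mat S * transpose_mat U)"
    unfolding svd using U S V
    by (simp add: transpose_mult[of _ M M _ N] transpose_mult[of _ M N _ N])
  then show ?thesis
    using U S V v
    by (simp add: assoc_mult_mat_vec[of _ N N _ M] assoc_mult_mat_vec[of _ N M _ M])
qed

lemma residual_V:
  assumes w: "w \<in> carrier_vec N"
  shows "sqn (y - H *\<^sub>v (V *\<^sub>v w)) = rss w"
proof -
  have "y - H *\<^sub>v (V *\<^sub>v w) = U *\<^sub>v (yt - S *\<^sub>v w)"
    unfolding H_mult_V[OF w] using U S w yt_carrier U_mult_yt
    by (simp add: mult_minus_distrib_mat_vec[of U M M])
  then have "sqn (y - H *\<^sub>v (V *\<^sub>v w)) = (\<Sum>i<M. ((yt - S *\<^sub>v w) $ i)\<^sup>2)"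
    using sqn_mult_orthonormal[OF U Uorth] sqn_eq_sum_squares S w yt_carrier by simp
  also have "\<dots> = (\<Sum>i<M. (yt $ i - (if i < R then lam i * w $ i else 0))\<^sup>2)"
    using S_mult_vec[OF w] yt_carrier by (intro sum.cong) auto
  also have "\<dots> = rss w"
    unfolding rss_def sum_lessThan_split[OF RM] by simp
  finally show ?thesis .
qed

lemma fobj_V:
  "w \<in> carrier_vec N \<Longrightarrow>
     fobj y H se2 sn2 (V *\<^sub>v w) = rss w / (2 * total_var w) + real M / 2 * ln (total_var w)"
  unfolding fobj_def total_var_def using residual_V sqn_mult_orthonormal[OF V Vorth] y by simp

lemma is_global_min_VI:
  assumes xt: "xt \<in> carrier_vec N"
    and le: "\<And>w. w \<in> carrier_vec N \<Longrightarrow>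
      fobj y H se2 sn2 (V *\<^sub>v xt) \<le> fobj y H se2 sn2 (V *\<^sub>v w)"
  shows "is_global_min N (fobj y H se2 sn2) (V *\<^sub>v xt)"
  unfolding is_global_min_def
proof (intro conjI ballI)
  show "V *\<^sub>v xt \<in> carrier_vec N" using V xt by simp
  fix z :: "real vec" assume z: "z \<in> carrier_vec N"
  show "fobj y H se2 sn2 (V *\<^sub>v xt) \<le> fobj y H se2 sn2 z"
    using le[of "transpose_mat V *\<^sub>v z"] V z by (simp add: V_mult_transpose_V)
qed

lemma penalized_rss_le:
  assumes xt: "xt \<in> carrier_vec N" and w: "w \<in> carrier_vec N"
    and d: "\<forall>j<R. (lam j)\<^sup>2 + 2 * \<nu> * se2 > 0"
    and head: "\<forall>j<R. xt $ j = yt $ j * lam j / ((lam j)\<^sup>2 + 2 * \<nu> * se2)"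
    and tail: "\<forall>j\<in>{R..<N}. 0 \<le> \<nu> \<and> \<nu> * xt $ j = 0"
  shows "rss xt + 2 * \<nu> * total_var xt \<le> rss w + 2 * \<nu> * total_var w"
proof -
  let ?c = "2 * \<nu> * se2"
  have split: "rss v + 2 * \<nu> * total_var v
      = (\<Sum>j<R. (yt $ j - lam j * v $ j)\<^sup>2 + ?c * (v $ j)\<^sup>2)
        + (\<Sum>j\<in>{R..<M}. (yt $ j)\<^sup>2)
        + 2 * se2 * (\<Sum>j\<in>{R..<N}. \<nu> * (v $ j)\<^sup>2) + 2 * \<nu> * sn2"
    if "v \<in> carrier_vec N" for v
    unfolding rss_def total_var_def sqn_eq_sum_squares[OF that] sum_lessThan_split[OF RN]
    by (simp add: sum.distrib sum_distrib_left algebra_simps)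
  have "(\<Sum>j<R. (yt $ j - lam j * xt $ j)\<^sup>2 + ?c * (xt $ j)\<^sup>2)
      \<le> (\<Sum>j<R. (yt $ j - lam j * w $ j)\<^sup>2 + ?c * (w $ j)\<^sup>2)"
    by (intro sum_mono quadratic_min_le) (use d head in auto)
  moreover have "(\<Sum>j\<in>{R..<N}. \<nu> * (xt $ j)\<^sup>2) \<le> (\<Sum>j\<in>{R..<N}. \<nu> * (w $ j)\<^sup>2)"
  proof (intro sum_mono)
    fix j assume "j \<in> {R..<N}"
    with tail have "0 \<le> \<nu>" "\<nu> * xt $ j * xt $ j = 0" by auto
    then show "\<nu> * (xt $ j)\<^sup>2 \<le> \<nu> * (w $ j)\<^sup>2" by (auto simp: power2_eq_square)
  qed
  then have "2 * se2 * (\<Sum>j\<in>{R..<N}. \<nu> * (xt $ j)\<^sup>2)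
      \<le> 2 * se2 * (\<Sum>j\<in>{R..<N}. \<nu> * (w $ j)\<^sup>2)"
    using se2 by (simp add: mult_left_mono)
  ultimately show ?thesis unfolding split[OF xt] split[OF w] by linarith
qed

lemma global_min_if_stationary:
  assumes xt: "xt \<in> carrier_vec N"
    and d: "\<forall>j<R. (lam j)\<^sup>2 + 2 * \<nu> * se2 > 0"
    and head: "\<forall>j<R. xt $ j = yt $ j * lam j / ((lam j)\<^sup>2 + 2 * \<nu> * se2)"
    and tail: "\<forall>j\<in>{R..<N}. 0 \<le> \<nu> \<and> \<nu> * xt $ j = 0"
    and stationary: "rss xt = (real M - 2 * \<nu>) * total_var xt"
  shows "is_global_min N (fobj y H se2 sn2) (V *\<^sub>v xt)"
proof (rule is_global_min_VI[OF xt])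
  fix w :: "real vec" assume w: "w \<in> carrier_vec N"
  have "rss xt / (2 * total_var xt) + real M / 2 * ln (total_var xt)
      \<le> rss w / (2 * total_var w) + real M / 2 * ln (total_var w)"
    using ratio_plus_log_le[OF total_var_pos total_var_pos _ stationary
        penalized_rss_le[OF xt w d head tail]] by simp
  then show "fobj y H se2 sn2 (V *\<^sub>v xt) \<le> fobj y H se2 sn2 (V *\<^sub>v w)"
    using fobj_V xt w by simp
qed

lemma stationarity_defect:
  assumes xt: "xt \<in> carrier_vec N"
    and d: "\<forall>j<R. (lam j)\<^sup>2 + 2 * \<nu> * se2 > 0"
    and head: "\<forall>j<R. xt $ j = yt $ j * lam j / ((lam j)\<^sup>2 + 2 * \<nu> * se2)"
  shows "rss xt - (real M - 2 * \<nu>) * total_var xt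
    = 2 * gfun M R lam yt se2 sn2 \<nu> - (real M - 2 * \<nu>) * se2 * (\<Sum>j\<in>{R..<N}. (xt $ j)\<^sup>2)"
proof -
  let ?d = "\<lambda>j. (lam j)\<^sup>2 + 2 * \<nu> * se2"
  have head_value: "(yt $ j - lam j * xt $ j)\<^sup>2 + 2 * \<nu> * se2 * (xt $ j)\<^sup>2
      = 2 * ((yt $ j)\<^sup>2 * \<nu> * se2 / ?d j)"
    if "j < R" for j
    using quadratic_min_value[of "lam j" "2 * \<nu> * se2" "xt $ j" "yt $ j"] d head that by simp
  have head_norm: "se2 * (xt $ j)\<^sup>2 = se2 * (yt $ j)\<^sup>2 * (lam j)\<^sup>2 / (?d j)\<^sup>2"
    if "j < R" for j
    using head that by (simp add: power_divide power_mult_distrib)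
  have penalty: "(\<Sum>j<R. (yt $ j - lam j * xt $ j)\<^sup>2 + 2 * \<nu> * se2 * (xt $ j)\<^sup>2)
      = (\<Sum>j<R. (yt $ j - lam j * xt $ j)\<^sup>2) + 2 * \<nu> * se2 * (\<Sum>j<R. (xt $ j)\<^sup>2)"
    by (simp add: sum.distrib sum_distrib_left)
  have "rss xt - (real M - 2 * \<nu>) * total_var xt
      = (\<Sum>j<R. (yt $ j - lam j * xt $ j)\<^sup>2 + 2 * \<nu> * se2 * (xt $ j)\<^sup>2)
        + (\<Sum>j\<in>{R..<M}. (yt $ j)\<^sup>2)
        - real M * ((\<Sum>j<R. se2 * (xt $ j)\<^sup>2) + sn2) + 2 * \<nu> * sn2
        - (real M - 2 * \<nu>) * se2 * (\<Sum>j\<in>{R..<N}. (xt $ j)\<^sup>2)"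
    unfolding penalty rss_def total_var_def sqn_eq_sum_squares[OF xt] sum_lessThan_split[OF RN]
    by (simp add: sum_distrib_left[symmetric] algebra_simps)
  also have "\<dots>
      = 2 * gfun M R lam yt se2 sn2 \<nu> - (real M - 2 * \<nu>) * se2 * (\<Sum>j\<in>{R..<N}. (xt $ j)\<^sup>2)"
    unfolding gfun_def using head_value head_norm by (simp add: sum_distrib_left algebra_simps)
  finally show ?thesis .
qed

lemma lam_sq_shift_pos:
  assumes \<nu>: "- (lam (R - 1))\<^sup>2 / (2 * se2) < \<nu>" and j: "j < R"
  shows "0 < (lam j)\<^sup>2 + 2 * \<nu> * se2"
proof -
  have "0 < lam (R - 1)" "lam (R - 1) \<le> lam j" using lam_pos lam_mono j by auto
  then have "(lam (R - 1))\<^sup>2 \<le> (lam j)\<^sup>2" by (simp add: power_mono)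
  moreover have "- (lam (R - 1))\<^sup>2 < 2 * \<nu> * se2" using \<nu> se2 by (simp add: field_simps)
  ultimately show ?thesis by linarith
qed

lemma global_min_zero_multiplier:
  assumes M1: "M \<ge> 1" and xt: "xt \<in> carrier_vec N"
    and head: "\<forall>j<R. xt $ j = yt $ j / lam j"
    and tail: "(\<Sum>j\<in>{R..<N}. (xt $ j)\<^sup>2) = 2 * gfun M R lam yt se2 sn2 0 / (real M * se2)"
  shows "is_global_min N (fobj y H se2 sn2) (V *\<^sub>v xt)"
proof -
  have d: "\<forall>j<R. (lam j)\<^sup>2 + 2 * 0 * se2 > 0" using lam_pos by auto
  have head': "\<forall>j<R. xt $ j = yt $ j * lam j / ((lam j)\<^sup>2 + 2 * 0 * se2)"
    using head lam_pos by (simp add: power2_eq_square)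
  have "rss xt - (real M - 2 * 0) * total_var xt = 0"
    using stationarity_defect[OF xt d head'] tail M1 se2 by simp
  then show ?thesis using global_min_if_stationary[OF xt d head'] by simp
qed

lemma global_min_root:
  assumes \<nu>: "- (lam (R - 1))\<^sup>2 / (2 * se2) < \<nu>" and nonneg: "R < N \<Longrightarrow> 0 \<le> \<nu>"
    and root: "gfun M R lam yt se2 sn2 \<nu> = 0"
  shows "is_global_min N (fobj y H se2 sn2)
    (V *\<^sub>v vec N (\<lambda>i. if i < R then yt $ i * lam i / ((lam i)\<^sup>2 + 2 * \<nu> * se2) else 0))"
    (is "is_global_min N _ (V *\<^sub>v ?xt)")
proof -
  have xt: "?xt \<in> carrier_vec N" by simp
  have d: "\<forall>j<R. (lam j)\<^sup>2 + 2 * \<nu> * se2 > 0" using lam_sq_shift_pos[OF \<nu>] by blast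
  have head: "\<forall>j<R. ?xt $ j = yt $ j * lam j / ((lam j)\<^sup>2 + 2 * \<nu> * se2)" using RN by simp
  have tail: "\<forall>j\<in>{R..<N}. 0 \<le> \<nu> \<and> \<nu> * ?xt $ j = 0" using nonneg by auto
  have "rss ?xt - (real M - 2 * \<nu>) * total_var ?xt = 0"
    using stationarity_defect[OF xt d head] root by simp
  then show ?thesis using global_min_if_stationary[OF xt d head tail] by simp
qed

lemma gram_shift_mult_V:
  assumes w: "w \<in> carrier_vec N"
  shows "(transpose_mat H * H + c \<cdot>\<^sub>m 1\<^sub>m N) *\<^sub>v (V *\<^sub>v w)
    = V *\<^sub>v vec N (\<lambda>i. ((if i < R then (lam i)\<^sup>2 else 0) + c) * w $ i)"
proof -
  have Vw: "V *\<^sub>v w \<in> carrier_vec N" using V w by simp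
  have Sw: "S *\<^sub>v w \<in> carrier_vec M" using S w by simp
  have "(transpose_mat H * H + c \<cdot>\<^sub>m 1\<^sub>m N) *\<^sub>v (V *\<^sub>v w)
      = transpose_mat H *\<^sub>v (H *\<^sub>v (V *\<^sub>v w)) + c \<cdot>\<^sub>v (V *\<^sub>v w)"
    using H Vw by (simp add: add_mult_distrib_mat_vec[of _ N N] smult_one_mat_mult_vec)
  also have "\<dots> = V *\<^sub>v (transpose_mat S *\<^sub>v (S *\<^sub>v w)) + V *\<^sub>v (c \<cdot>\<^sub>v w)"
    unfolding H_mult_V[OF w] transpose_H_mult[OF mult_mat_vec_carrier[OF U Sw]]
    using transpose_mult_mat_vec_cancel[OF U Uorth Sw] mult_mat_vec[OF V w] by simp
  also have "\<dots> = V *\<^sub>v (transpose_mat S *\<^sub>v (S *\<^sub>v w) + c \<cdot>\<^sub>v w)"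
    using V S w by (simp add: mult_add_distrib_mat_vec[of V N N])
  also have "transpose_mat S *\<^sub>v (S *\<^sub>v w) + c \<cdot>\<^sub>v w
      = vec N (\<lambda>i. ((if i < R then (lam i)\<^sup>2 else 0) + c) * w $ i)"
    unfolding transpose_S_mult_vec[OF Sw] unfolding S_mult_vec[OF w] using w RM
    by (intro eq_vecI) (auto simp: power2_eq_square algebra_simps)
  finally show ?thesis .
qed

lemma regularized_solution_V:
  assumes d: "\<forall>j<R. (lam j)\<^sup>2 + c \<noteq> 0" and c: "R < N \<Longrightarrow> c \<noteq> 0"
  shows "the (mat_inverse (transpose_mat H * H + c \<cdot>\<^sub>m 1\<^sub>m N)) *\<^sub>v (transpose_mat H *\<^sub>v y)
    = V *\<^sub>v vec N (\<lambda>i. if i < R then yt $ i * lam i / ((lam i)\<^sup>2 + c) else 0)"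
proof (rule mat_inverse_mult_vec_eq)
  let ?D = "\<lambda>i. (if i < R then (lam i)\<^sup>2 else 0) + c"
  have D: "?D i \<noteq> 0" if "i < N" for i using d c that by (cases "i < R") auto
  show "transpose_mat H * H + c \<cdot>\<^sub>m 1\<^sub>m N \<in> carrier_mat N N" using H by simp
  show "V *\<^sub>v vec N (\<lambda>i. if i < R then yt $ i * lam i / ((lam i)\<^sup>2 + c) else 0) \<in> carrier_vec N"
    using V by simp
  show "(transpose_mat H * H + c \<cdot>\<^sub>m 1\<^sub>m N) *\<^sub>v
      (V *\<^sub>v vec N (\<lambda>i. if i < R then yt $ i * lam i / ((lam i)\<^sup>2 + c) else 0))
    = transpose_mat H *\<^sub>v y"
    unfolding gram_shift_mult_V[OF vec_carrier] transpose_H_mult[OF y]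
      transpose_S_mult_vec[OF yt_carrier]
    using d by (intro arg_cong[where f = "\<lambda>v. V *\<^sub>v v"] eq_vecI) auto
  fix v assume v: "v \<in> carrier_vec N"
    and Av: "(transpose_mat H * H + c \<cdot>\<^sub>m 1\<^sub>m N) *\<^sub>v v = 0\<^sub>v N"
  let ?w = "transpose_mat V *\<^sub>v v"
  have "V *\<^sub>v vec N (\<lambda>i. ?D i * ?w $ i) = 0\<^sub>v N"
    using gram_shift_mult_V[of ?w] V_mult_transpose_V[OF v] Av V v by simp
  then have "vec N (\<lambda>i. ?D i * ?w $ i) = transpose_mat V *\<^sub>v 0\<^sub>v N"
    using transpose_mult_mat_vec_cancel[OF V Vorth, of "vec N (\<lambda>i. ?D i * ?w $ i)"] by simp
  also have "\<dots> = 0\<^sub>v N" using V by (intro eq_vecI) auto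
  finally have Dw: "vec N (\<lambda>i. ?D i * ?w $ i) = 0\<^sub>v N" .
  have "?w = 0\<^sub>v N"
  proof (rule eq_vecI)
    fix i assume "i < dim_vec (0\<^sub>v N :: real vec)"
    then have i: "i < N" by simp
    have "?D i * ?w $ i = 0" using arg_cong[OF Dw, of "\<lambda>u. u $ i"] i by simp
    then show "?w $ i = 0\<^sub>v N $ i" using D[OF i] i by simp
  qed (use V in simp)
  then show "v = 0\<^sub>v N" using V_mult_transpose_V[OF v] V by auto
qed

end

theorem mainTheorem4:
  fixes M N R :: nat and y :: "real vec" and H U V S :: "real mat"
    and lam :: "nat \<Rightarrow> real" and se2 sn2 :: real
  assumes M1: "M \<ge> 1" and N1: "N \<ge> 1"
    and y: "y \<in> carrier_vec M"
    and H: "H \<in> carrier_mat M N"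
    and rank: "R = vec_space.rank M H" and R1: "R \<ge> 1"
    and se2: "se2 > 0" and sn2: "sn2 > 0"
    and U: "U \<in> carrier_mat M M" and Uorth: "transpose_mat U * U = 1\<^sub>m M"
    and V: "V \<in> carrier_mat N N" and Vorth: "transpose_mat V * V = 1\<^sub>m N"
    and S: "S \<in> carrier_mat M N"
    and Sdiag: "\<forall>i<M. \<forall>j<N. S $$ (i,j) = (if i = j \<and> i < R then lam i else 0)"
    and lam_mono: "\<forall>i j. i \<le> j \<and> j < R \<longrightarrow> lam j \<le> lam i"
    and lam_pos: "\<forall>j<R. lam j > 0"
    and svd: "H = U * S * transpose_mat V"
  shows
    "(R \<le> N - 1 \<and> gfun M R lam (transpose_mat U *\<^sub>v y) se2 sn2 0 \<ge> 0 \<longrightarrow>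
       (\<forall>xt \<in> carrier_vec N.
          (\<forall>j<R. xt $ j = (transpose_mat U *\<^sub>v y) $ j / lam j)
          \<and> (\<Sum>i\<in>{R..<N}. (xt $ i)\<^sup>2)
              = 2 * gfun M R lam (transpose_mat U *\<^sub>v y) se2 sn2 0 / (real M * se2)
          \<longrightarrow> is_global_min N (fobj y H se2 sn2) (V *\<^sub>v xt)))
     \<and>
     (R \<le> N - 1 \<and> gfun M R lam (transpose_mat U *\<^sub>v y) se2 sn2 0 < 0 \<longrightarrow>
       (\<exists>\<nu>. 0 < \<nu> \<and> \<nu> \<le> real M / 2 \<and> gfun M R lam (transpose_mat U *\<^sub>v y) se2 sn2 \<nu> = 0)
       \<and> (\<forall>\<nu>. 0 < \<nu> \<and> \<nu> \<le> real M / 2 \<and> gfun M R lam (transpose_mat U *\<^sub>v y) se2 sn2 \<nu> = 0 \<longrightarrow>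
            is_global_min N (fobj y H se2 sn2)
              (V *\<^sub>v vec N (\<lambda>i. if i < R
                  then (transpose_mat U *\<^sub>v y) $ i * lam i / ((lam i)\<^sup>2 + 2 * \<nu> * se2)
                  else 0))))
     \<and>
     (R = N \<longrightarrow>
       (\<forall>\<nu>. - (lam (R - 1))\<^sup>2 / (2 * se2) < \<nu> \<and> \<nu> \<le> real M / 2
            \<and> gfun M R lam (transpose_mat U *\<^sub>v y) se2 sn2 \<nu> = 0 \<longrightarrow>
            is_global_min N (fobj y H se2 sn2)
              (the (mat_inverse (transpose_mat H * H + (2 * \<nu> * se2) \<cdot>\<^sub>m 1\<^sub>m N))
                 *\<^sub>v (transpose_mat H *\<^sub>v y))))"
proof -
  interpret svd_setting M N R y H U V S lam se2 sn2
    using assms vec_space.rank_le_nr[OF H] vec_space.rank_le_nc[OF H] by unfold_locales auto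
  have root_min: "is_global_min N (fobj y H se2 sn2)
      (V *\<^sub>v vec N (\<lambda>i. if i < R then yt $ i * lam i / ((lam i)\<^sup>2 + 2 * \<nu> * se2) else 0))"
    if "0 < \<nu>" "gfun M R lam yt se2 sn2 \<nu> = 0" for \<nu>
  proof (rule global_min_root)
    have "- (lam (R - 1))\<^sup>2 / (2 * se2) \<le> 0" using se2 by simp
    then show "- (lam (R - 1))\<^sup>2 / (2 * se2) < \<nu>" using that by linarith
  qed (use that in auto)
  have regularized_min: "is_global_min N (fobj y H se2 sn2)
      (the (mat_inverse (transpose_mat H * H + (2 * \<nu> * se2) \<cdot>\<^sub>m 1\<^sub>m N)) *\<^sub>v (transpose_mat H *\<^sub>v y))"
    if "R = N" "- (lam (R - 1))\<^sup>2 / (2 * se2) < \<nu>" "gfun M R lam yt se2 sn2 \<nu> = 0" for \<nu>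
  proof -
    have "\<forall>j<R. (lam j)\<^sup>2 + 2 * \<nu> * se2 \<noteq> 0" using lam_sq_shift_pos[OF that(2)] by force
    then show ?thesis using regularized_solution_V global_min_root that by auto
  qed
  show ?thesis
    using global_min_zero_multiplier[OF M1] gfun_root_exists[OF lam_pos se2]
      root_min regularized_min
    by blast
qed

end
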